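(* Assume (C1) and (C2). Let $m_*:=\inf_{u\in\mathcal{M}}I(u)$ and $c_*:=\inf_{u\in\mathcal{N}}I(u)$. Then $m_*>0$ and $c_*>0$, and both infima are achieved: there exist $u_0\in\mathcal{M}$ with $I(u_0)=m_*$ and $\bar u\in\mathcal{N}$ with $I(\bar u)=c_*$.
   Context: Fix real numbers $p,q,r$ with $1<p<q$, $\frac p2$ a positive integer, and $r\ge1$, and functions $a,b,c:\mathbb{Z}\to(0,+\infty)$. Conditions: - (C1) There is $b_0>0$ with $b(n)\ge b_0$ for all $n$ and $b(n)\to+\infty$ as $|n|\to\infty$. - (C2) There is $c_0>0$ with $c(n)\le c_0$ for all $n$ and $\sum_n c(n)<+\infty$. Notation for a real sequence $u=(u(n))_{n\in\mathbb{Z}}$: $\Delta u(n)=u(n+1)-u(n)$, $u^+(n)=\max\{u(n),0\}$, $u^-(n)=\min\{u(n),0\}$. Spaces: - $E$ is the set of real sequences $u$ with $\|u\|:=\big(\sum_n[a(n)|\Delta u(n)|^p+b(n)|u(n)|^p]\big)^{1/p}<\infty$. - $\mathcal{D}=\{u\in E:\sum_n c(n)|u(n)|^q\ln|u(n)|^r<+\infty\}$, where terms with $u(n)=0$ are read as $0$. For $u,v\in\mathcal{D}$: - $I(u)=\frac1p\|u\|^p+\frac{r}{q^2}\sum_n c(n)|u(n)|^q-\frac1q\sum_n c(n)|u(n)|^q\ln|u(n)|^r$. - $\langle I'(u),v\rangle=\sum_n[a(n)|\Delta u(n)|^{p-2}\Delta u(n)\Delta v(n)+b(n)|u(n)|^{p-2}u(n)v(n)]-\sum_n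 c(n)|u(n)|^{q-2}u(n)v(n)\ln|u(n)|^r$. Sets: - $\mathcal{N}=\{u\in\mathcal{D}:u\ne0,\ \langle I'(u),u\rangle=0\}$. - $\mathcal{M}=\{u\in\mathcal{D}:u^+\ne0,\ u^-\neq0,\ \langle I'(u),u^+\rangle=0,\ \langle I'(u),u^-\rangle=0\}$. *)

theory Defs
  imports "HOL-Analysis.Analysis"
begin

definition fdiff :: "(int \<Rightarrow> real) \<Rightarrow> int \<Rightarrow> real" where
  "fdiff u n = u (n + 1) - u n"

definition posp :: "(int \<Rightarrow> real) \<Rightarrow> int \<Rightarrow> real" where
  "posp u n = max (u n) 0"

definition negp :: "(int \<Rightarrow> real) \<Rightarrow> int \<Rightarrow> real" where
  "negp u n = min (u n) 0"

definition normterm :: "real \<Rightarrow> (int \<Rightarrow> real) \<Rightarrow> (int \<Rightarrow> real) \<Rightarrow> (int \<Rightarrow> real) \<Rightarrow> int \<Rightarrow> real" where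
  "normterm p a b u n = a n * \<bar>fdiff u n\<bar> powr p + b n * \<bar>u n\<bar> powr p"

definition spaceE :: "real \<Rightarrow> (int \<Rightarrow> real) \<Rightarrow> (int \<Rightarrow> real) \<Rightarrow> (int \<Rightarrow> real) set" where
  "spaceE p a b = {u. normterm p a b u summable_on UNIV}"

definition normE :: "real \<Rightarrow> (int \<Rightarrow> real) \<Rightarrow> (int \<Rightarrow> real) \<Rightarrow> (int \<Rightarrow> real) \<Rightarrow> real" where
  "normE p a b u = (\<Sum>\<^sub>\<infinity>n. normterm p a b u n) powr (1 / p)"

definition logterm :: "real \<Rightarrow> real \<Rightarrow> (int \<Rightarrow> real) \<Rightarrow> (int \<Rightarrow> real) \<Rightarrow> int \<Rightarrow> real" where
  "logterm q r c u n = (if u n = 0 then 0 else c n * \<bar>u n\<bar> powr q * ln (\<bar>u n\<bar> powr r))"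

definition domD :: "real \<Rightarrow> real \<Rightarrow> real \<Rightarrow> (int \<Rightarrow> real) \<Rightarrow> (int \<Rightarrow> real) \<Rightarrow> (int \<Rightarrow> real) \<Rightarrow> (int \<Rightarrow> real) set" where
  "domD p q r a b c = {u \<in> spaceE p a b. logterm q r c u summable_on UNIV}"

definition funcI :: "real \<Rightarrow> real \<Rightarrow> real \<Rightarrow> (int \<Rightarrow> real) \<Rightarrow> (int \<Rightarrow> real) \<Rightarrow> (int \<Rightarrow> real) \<Rightarrow> (int \<Rightarrow> real) \<Rightarrow> real" where
  "funcI p q r a b c u =
     (1 / p) * normE p a b u powr p
     + (r / q\<^sup>2) * (\<Sum>\<^sub>\<infinity>n. c n * \<bar>u n\<bar> powr q)
     - (1 / q) * (\<Sum>\<^sub>\<infinity>n. logterm q r c u n)"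

definition dI :: "real \<Rightarrow> real \<Rightarrow> real \<Rightarrow> (int \<Rightarrow> real) \<Rightarrow> (int \<Rightarrow> real) \<Rightarrow> (int \<Rightarrow> real) \<Rightarrow> (int \<Rightarrow> real) \<Rightarrow> (int \<Rightarrow> real) \<Rightarrow> real" where
  "dI p q r a b c u v =
     (\<Sum>\<^sub>\<infinity>n. a n * \<bar>fdiff u n\<bar> powr (p - 2) * fdiff u n * fdiff v n
             + b n * \<bar>u n\<bar> powr (p - 2) * u n * v n)
     - (\<Sum>\<^sub>\<infinity>n. (if u n = 0 then 0 else
             c n * \<bar>u n\<bar> powr (q - 2) * u n * v n * ln (\<bar>u n\<bar> powr r)))"

definition nehari :: "real \<Rightarrow> real \<Rightarrow> real \<Rightarrow> (int \<Rightarrow> real) \<Rightarrow> (int \<Rightarrow> real) \<Rightarrow> (int \<Rightarrow> real) \<Rightarrow> (int \<Rightarrow> real) set" where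
  "nehari p q r a b c = {u \<in> domD p q r a b c. u \<noteq> (\<lambda>_. 0) \<and> dI p q r a b c u u = 0}"

definition signnehari :: "real \<Rightarrow> real \<Rightarrow> real \<Rightarrow> (int \<Rightarrow> real) \<Rightarrow> (int \<Rightarrow> real) \<Rightarrow> (int \<Rightarrow> real) \<Rightarrow> (int \<Rightarrow> real) set" where
  "signnehari p q r a b c = {u \<in> domD p q r a b c. posp u \<noteq> (\<lambda>_. 0) \<and> negp u \<noteq> (\<lambda>_. 0)
      \<and> dI p q r a b c u (posp u) = 0 \<and> dI p q r a b c u (negp u) = 0}"

end

theory Submission
  imports Defs
begin

text \<open>
  Since \<open>p = 2k\<close> is an even integer, \<open>|x|\<^sup>p = x\<^sup>p\<close> and the discrete
  \<open>p\<close>-Laplacian terms are polynomial. If \<open>\<parallel>u\<parallel>\<^sup>p < b0\<close> then \<open>|u(n)| < 1\<close>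
  for all \<open>n\<close>, so the logarithmic sum is negative; hence \<open>\<parallel>u\<parallel>\<^sup>p \<ge> b0\<close> on \<open>\<N>\<close>,
  where \<open>I(u) = (1/p - 1/q)\<parallel>u\<parallel>\<^sup>p + (r/q\<^sup>2) \<Sum> c|u|\<^sup>q \<ge> (1/p - 1/q) b0\<close>.
  A minimising sequence is thus bounded in \<open>E\<close>, hence uniformly bounded, and by
  Tychonoff a subsequence converges pointwise to some \<open>v\<close>. The \<open>c\<close>-weighted sums
  converge by dominated convergence (\<open>c\<close> is summable) and \<open>\<parallel>\<cdot>\<parallel>\<^sup>p\<close> is lower
  semicontinuous (Fatou), so \<open>v\<close> is nonzero (resp. sign-changing) with
  \<open>\<langle>I'(v),v\<rangle> \<le> 0\<close> (resp. \<open>\<langle>I'(v),v\<^sup>\<plusminus>\<rangle> \<le> 0\<close>), and its energy bounds the infimum.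
  Rescaling to \<open>t v\<close> (intermediate value theorem) or \<open>s v\<^sup>+ + t v\<^sup>-\<close>
  (Poincare-Miranda, from Brouwer) with \<open>s, t \<in> (0, 1]\<close> lands in \<open>\<N>\<close> (resp. \<open>\<M>\<close>)
  without increasing the energy. \<open>\<M>\<close> is nonempty: a large multiple of
  \<open>\<delta>\<^sub>0 - \<delta>\<^sub>1\<close> has nonpositive derivative in the direction of both of its parts.
\<close>

lemma summable_on_dominated:
  fixes f g :: "'a \<Rightarrow> real"
  assumes "g summable_on A" "\<And>x. x \<in> A \<Longrightarrow> \<bar>f x\<bar> \<le> g x"
  shows "f summable_on A"
proof -
  have "(\<lambda>x. \<bar>f x\<bar>) summable_on A"
    by (rule summable_on_comparison_test[OF assms(1)]) (use assms(2) in auto)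
  then show ?thesis
    by (simp add: summable_on_iff_abs_summable_on_real[of f])
qed

lemma abs_infsum_le_dominated:
  fixes f g :: "'a \<Rightarrow> real"
  assumes "g summable_on A" "\<And>x. x \<in> A \<Longrightarrow> \<bar>f x\<bar> \<le> g x"
  shows "\<bar>infsum f A\<bar> \<le> infsum g A"
  using norm_infsum_le[OF has_sum_infsum[OF summable_on_dominated[OF assms]]
      has_sum_infsum[OF assms(1)]] assms(2) by simp

lemma member_le_infsum:
  fixes f :: "'a \<Rightarrow> real"
  assumes "f summable_on UNIV" "\<And>x. 0 \<le> f x"
  shows "f x \<le> infsum f UNIV"
  using finite_sum_le_infsum[OF assms(1), of "{x}"] assms(2) by simp

lemma infsum_dominated_convergence:
  fixes f :: "'k \<Rightarrow> 'a \<Rightarrow> real" and h g :: "'a \<Rightarrow> real"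
  assumes g: "g summable_on UNIV"
    and f_le: "\<forall>\<^sub>F k in F. \<forall>x. \<bar>f k x\<bar> \<le> g x" and h_le: "\<And>x. \<bar>h x\<bar> \<le> g x"
    and lim: "\<And>x. ((\<lambda>k. f k x) \<longlongrightarrow> h x) F"
  shows "((\<lambda>k. infsum (f k) UNIV) \<longlongrightarrow> infsum h UNIV) F"
proof (rule tendstoI)
  fix e :: real assume "e > 0"
  obtain A where A: "finite A" "dist (sum g A) (infsum g UNIV) \<le> e / 4"
    using infsum_finite_approximation[OF g, of "e/4"] \<open>e > 0\<close> by auto
  have split: "infsum k UNIV = sum k A + infsum k (- A)" if "k summable_on UNIV" for k :: "'a \<Rightarrow> real"
    using infsum_Un_disjoint[of k A "- A"] summable_on_subset[OF that] A(1) by simp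
  have g_tail: "infsum g (- A) \<le> e / 4"
    using split[OF g] A(2) by (simp add: dist_real_def)
  have g_sum: "g summable_on - A" by (rule summable_on_subset[OF g]) simp
  have "((\<lambda>k. sum (f k) A) \<longlongrightarrow> sum h A) F"
    by (intro tendsto_sum lim)
  then have "\<forall>\<^sub>F k in F. dist (sum (f k) A) (sum h A) < e / 4"
    by (rule tendstoD) (use \<open>e > 0\<close> in simp)
  then show "\<forall>\<^sub>F k in F. dist (infsum (f k) UNIV) (infsum h UNIV) < e"
    using f_le
  proof eventually_elim
    case (elim k)
    have "\<bar>infsum (f k) (- A)\<bar> \<le> infsum g (- A)" "\<bar>infsum h (- A)\<bar> \<le> infsum g (- A)"
      using abs_infsum_le_dominated[OF g_sum] elim(2) h_le by auto
    moreover have "f k summable_on UNIV" "h summable_on UNIV"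
      using summable_on_dominated[OF g] elim(2) h_le by auto
    moreover have "\<bar>sum (f k) A - sum h A\<bar> < e / 4"
      using elim(1) by (simp add: dist_real_def)
    ultimately show ?case
      using split[of "f k"] split[of h] g_tail unfolding dist_real_def abs_le_iff abs_less_iff
      by linarith
  qed
qed

lemma infsum_Fatou:
  fixes f :: "nat \<Rightarrow> 'a \<Rightarrow> real" and h :: "'a \<Rightarrow> real"
  assumes nonneg: "\<And>k x. 0 \<le> f k x" and summable: "\<And>k. f k summable_on UNIV"
    and lim: "\<And>x. (\<lambda>k. f k x) \<longlonglongrightarrow> h x"
    and lim_sum: "(\<lambda>k. infsum (f k) UNIV) \<longlonglongrightarrow> l"
  shows "h summable_on UNIV" "infsum h UNIV \<le> l"
proof -
  have finite_le: "sum h A \<le> l" if "finite A" for A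
  proof -
    have "((\<lambda>k. sum (f k) A) \<longlongrightarrow> sum h A) sequentially"
      by (intro tendsto_sum lim)
    moreover have "\<forall>\<^sub>F k in sequentially. sum (f k) A \<le> infsum (f k) UNIV"
      using finite_sum_le_infsum[OF summable that] nonneg by simp
    ultimately show ?thesis
      using tendsto_le[OF trivial_limit_sequentially lim_sum] by blast
  qed
  have "0 \<le> h x" for x
    by (rule tendsto_lowerbound[OF lim]) (simp_all add: nonneg)
  then show h: "h summable_on UNIV"
    by (intro nonneg_bdd_above_summable_on bdd_aboveI2[of _ _ l]) (auto intro: finite_le)
  show "infsum h UNIV \<le> l"
    by (rule infsum_le_finite_sums[OF h]) (simp add: finite_le)
qed

lemma minimizing_sequence:
  fixes f :: "'a \<Rightarrow> real"
  assumes "X \<noteq> {}" "bdd_below (f ` X)"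
  obtains u where "\<And>k. u k \<in> X" "(\<lambda>k. f (u k)) \<longlonglongrightarrow> Inf (f ` X)"
proof -
  let ?c = "Inf (f ` X)"
  have "\<exists>y \<in> X. f y < ?c + inverse (real (Suc k))" for k
    using cInf_lessD[of "f ` X" "?c + inverse (real (Suc k))"] assms(1) by auto
  then obtain u where u: "\<And>k. u k \<in> X" "\<And>k. f (u k) < ?c + inverse (real (Suc k))"
    by metis
  have upper: "(\<lambda>k. ?c + inverse (real (Suc k))) \<longlonglongrightarrow> ?c"
    using tendsto_add[OF tendsto_const LIMSEQ_inverse_real_of_nat, of ?c] by simp
  have "(\<lambda>k. f (u k)) \<longlonglongrightarrow> ?c"
  proof (rule tendsto_sandwich[OF _ _ tendsto_const upper])
    show "\<forall>\<^sub>F k in sequentially. ?c \<le> f (u k)"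
      using cInf_lower[OF imageI[OF u(1)] assms(2)] by simp
    show "\<forall>\<^sub>F k in sequentially. f (u k) \<le> ?c + inverse (real (Suc k))"
      using u(2) by (simp add: less_imp_le)
  qed
  with u(1) show thesis by (rule that)
qed

lemma bounded_pointwise_convergent_subseq:
  fixes u :: "nat \<Rightarrow> 'a::countable \<Rightarrow> real"
  assumes bound: "\<And>k x. \<bar>u k x\<bar> \<le> R"
  obtains \<sigma> v where "strict_mono \<sigma>" "\<And>x. (\<lambda>k. u (\<sigma> k) x) \<longlonglongrightarrow> v x"
proof -
  let ?S = "PiE UNIV (\<lambda>_::'a. cball (0::real) R)"
  have "compact ?S"
    using compactin_PiE[of "\<lambda>_. euclidean" UNIV "\<lambda>_::'a. cball (0::real) R"]
    by (simp add: euclidean_product_topology)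
  moreover have "u k \<in> ?S" for k
    using bound by (auto simp: PiE_iff)
  ultimately obtain v \<sigma> where "strict_mono \<sigma>" "(u \<circ> \<sigma>) \<longlonglongrightarrow> v"
    using seq_compactE[OF compact_imp_seq_compact, of ?S u] by blast
  moreover have "(\<lambda>k. u (\<sigma> k) x) \<longlonglongrightarrow> v x" for x
    using continuous_on_tendsto_compose[OF continuous_on_product_coordinates \<open>(u \<circ> \<sigma>) \<longlonglongrightarrow> v\<close>]
    by simp
  ultimately show thesis
    using that by blast
qed

lemma Poincare_Miranda_square:
  fixes f g :: "real \<times> real \<Rightarrow> real"
  assumes "e < R"
    and f_cont: "continuous_on ({e..R} \<times> {e..R}) f" and g_cont: "continuous_on ({e..R} \<times> {e..R}) g"
    and f_left: "\<And>t. t \<in> {e..R} \<Longrightarrow> f (e, t) > 0" and f_right: "\<And>t. t \<in> {e..R} \<Longrightarrow> f (R, t) \<le> 0"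
    and g_bot: "\<And>s. s \<in> {e..R} \<Longrightarrow> g (s, e) > 0" and g_top: "\<And>s. s \<in> {e..R} \<Longrightarrow> g (s, R) \<le> 0"
  obtains s t where "s \<in> {e..R}" "t \<in> {e..R}" "f (s, t) = 0" "g (s, t) = 0"
proof -
  \<comment> \<open>A fixed point of \<open>z \<mapsto> clamp (z + (f z, g z))\<close> is a common zero,
    by the sign conditions on the edges.\<close>
  define clamp where "clamp x = max e (min R x)" for x :: real
  define H where "H z = (clamp (fst z + f z), clamp (snd z + g z))" for z
  let ?S = "{e..R} \<times> {e..R}"
  have clamp_cont: "continuous_on UNIV clamp"
    unfolding clamp_def by (intro continuous_intros)
  have "continuous_on ?S H"
    unfolding H_def by (intro continuous_on_Pair continuous_on_compose2[OF clamp_cont]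
        continuous_intros f_cont g_cont) auto
  moreover have "H \<in> ?S \<rightarrow> ?S" "compact ?S" "convex ?S" "?S \<noteq> {}"
    using \<open>e < R\<close> by (auto simp: H_def clamp_def intro!: compact_Times convex_Times)
  ultimately obtain z where "z \<in> ?S" "H z = z"
    using brouwer[of ?S H] by blast
  then obtain s t where st: "(s, t) \<in> ?S" "H (s, t) = (s, t)"
    by (metis prod.collapse)
  have clamp_fixed: "y = 0"
    if "x \<in> {e..R}" "clamp (x + y) = x" "x = e \<Longrightarrow> 0 < y" "x = R \<Longrightarrow> y \<le> 0" for x y
    using that \<open>e < R\<close> by (auto simp: clamp_def max_def min_def split: if_splits)
  have fixed: "clamp (s + f (s, t)) = s" "clamp (t + g (s, t)) = t"
    using st(2) by (auto simp: H_def)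
  have "f (s, t) = 0"
    by (rule clamp_fixed[OF _ fixed(1)]) (use st(1) f_left[of t] f_right[of t] in auto)
  moreover have "g (s, t) = 0"
    by (rule clamp_fixed[OF _ fixed(2)]) (use st(1) g_bot[of s] g_top[of s] in auto)
  ultimately show thesis
    by (intro that) (use st(1) in auto)
qed

lemma powr_mult_abs_ln_le_small:
  fixes x q :: real
  assumes "0 < x" "x \<le> 1"
  shows "x powr q * \<bar>ln x\<bar> \<le> x powr (q - 1)"
proof -
  have "- ln x \<le> 1 / x - 1"
    using ln_le_minus_one[of "1 / x"] assms by (simp add: ln_div)
  then have "\<bar>ln x\<bar> \<le> 1 / x"
    using assms by simp
  then have "x powr q * \<bar>ln x\<bar> \<le> x powr q * (1 / x)"
    by (intro mult_left_mono) auto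
  also have "\<dots> = x powr (q - 1)"
    using assms by (simp add: powr_diff)
  finally show ?thesis .
qed

lemma powr_mult_abs_ln_le:
  fixes x q R :: real
  assumes "0 < x" "x \<le> R" "1 \<le> R" "1 \<le> q"
  shows "x powr q * \<bar>ln x\<bar> \<le> R powr (q + 1)"
proof (cases "x \<le> 1")
  case True
  have "x powr q * \<bar>ln x\<bar> \<le> x powr (q - 1)"
    using powr_mult_abs_ln_le_small[OF assms(1) True] .
  also have "\<dots> \<le> 1"
    using powr_mono2[of "q - 1" x 1] assms True by simp
  also have "1 \<le> R powr (q + 1)"
    using assms by (intro ge_one_powr_ge_zero) auto
  finally show ?thesis .
next
  case False
  then have "\<bar>ln x\<bar> \<le> x"
    using ln_le_minus_one[of x] by auto
  then have "x powr q * \<bar>ln x\<bar> \<le> x powr q * x"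
    by (intro mult_left_mono) auto
  also have "\<dots> = x powr (q + 1)"
    using assms by (simp add: powr_add)
  also have "\<dots> \<le> R powr (q + 1)"
    using assms by (intro powr_mono2) auto
  finally show ?thesis .
qed

lemma tendsto_abs_powr_mult_ln:
  fixes q :: real
  assumes "1 < q" and f: "(f \<longlongrightarrow> y) F"
  shows "((\<lambda>k. if f k = 0 then 0 else \<bar>f k\<bar> powr q * ln \<bar>f k\<bar>)
    \<longlongrightarrow> (if y = 0 then 0 else \<bar>y\<bar> powr q * ln \<bar>y\<bar>)) F"
proof (cases "y = 0")
  case False
  have "((\<lambda>k. \<bar>f k\<bar> powr q * ln \<bar>f k\<bar>) \<longlongrightarrow> \<bar>y\<bar> powr q * ln \<bar>y\<bar>) F"
    using False by (intro tendsto_intros f) auto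
  moreover have "\<forall>\<^sub>F k in F. f k \<noteq> 0"
    by (rule tendsto_imp_eventually_ne[OF f False])
  ultimately show ?thesis
    using False by (auto elim!: Lim_transform_eventually eventually_mono)
next
  case True
  then have abs_lim: "((\<lambda>k. \<bar>f k\<bar>) \<longlongrightarrow> 0) F"
    using tendsto_rabs[OF f] by simp
  then have "\<forall>\<^sub>F k in F. \<bar>f k\<bar> < 1"
    using order_tendstoD(2)[OF abs_lim] by simp
  then have bound: "\<forall>\<^sub>F k in F. norm (if f k = 0 then 0 else \<bar>f k\<bar> powr q * ln \<bar>f k\<bar>)
      \<le> norm (\<bar>f k\<bar> powr (q - 1)) * 1"
    by eventually_elim (use powr_mult_abs_ln_le_small[of "\<bar>f _\<bar>" q] in \<open>auto simp: abs_mult\<close>)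
  have "((\<lambda>k. \<bar>f k\<bar> powr (q - 1)) \<longlongrightarrow> 0) F"
    using abs_lim \<open>1 < q\<close> by (intro tendsto_zero_powrI tendsto_const) auto
  then have "((\<lambda>k. if f k = 0 then 0 else \<bar>f k\<bar> powr q * ln \<bar>f k\<bar>) \<longlongrightarrow> 0) F"
    using bound by (rule tendsto_0_le)
  with True show ?thesis by simp
qed

section \<open>Positive and negative parts\<close>

lemma posp_plus_negp: "posp u n + negp u n = u n"
  by (simp add: posp_def negp_def)

lemma fdiff_posp_plus_negp: "fdiff (posp u) n + fdiff (negp u) n = fdiff u n"
  by (simp add: fdiff_def posp_def negp_def)

lemma fdiff_posp_negp_same_sign: "0 \<le> fdiff (posp u) n * fdiff (negp u) n"
  by (simp add: fdiff_def posp_def negp_def max_def min_def mult_nonneg_nonpos mult_nonpos_nonpos)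

lemma abs_fdiff_posp_le: "\<bar>fdiff (posp u) n\<bar> \<le> \<bar>fdiff u n\<bar>"
  and abs_fdiff_negp_le: "\<bar>fdiff (negp u) n\<bar> \<le> \<bar>fdiff u n\<bar>"
  using fdiff_posp_negp_same_sign[of u n] fdiff_posp_plus_negp[of u n]
  by (auto simp: abs_if zero_le_mult_iff)

lemma abs_posp_le: "\<bar>posp u n\<bar> \<le> \<bar>u n\<bar>"
  and abs_negp_le: "\<bar>negp u n\<bar> \<le> \<bar>u n\<bar>"
  by (simp_all add: posp_def negp_def)

lemma posp_uminus: "posp (\<lambda>n. - u n) = (\<lambda>n. - negp u n)"
  and negp_uminus: "negp (\<lambda>n. - u n) = (\<lambda>n. - posp u n)"
  by (auto simp: posp_def negp_def fun_eq_iff)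

lemma posp_cmult: "0 \<le> s \<Longrightarrow> posp (\<lambda>n. s * u n) = (\<lambda>n. s * posp u n)"
  by (auto simp: posp_def fun_eq_iff max_def zero_le_mult_iff mult_le_0_iff)

lemma posp_eq_zero_iff: "posp u = (\<lambda>_. 0) \<longleftrightarrow> (\<forall>n. u n \<le> 0)"
  unfolding posp_def fun_eq_iff by (auto simp: max_def)

lemma negp_eq_zero_iff: "negp u = (\<lambda>_. 0) \<longleftrightarrow> (\<forall>n. 0 \<le> u n)"
  unfolding negp_def fun_eq_iff by (simp add: min.absorb_iff2[symmetric])

lemma fdiff_cmult: "fdiff (\<lambda>n. s * u n) n = s * fdiff u n"
  by (simp add: fdiff_def algebra_simps)

lemma fdiff_uminus: "fdiff (\<lambda>n. - u n) n = - fdiff u n"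
  by (simp add: fdiff_def)

definition scale_parts :: "(int \<Rightarrow> real) \<Rightarrow> real \<Rightarrow> real \<Rightarrow> int \<Rightarrow> real" where
  "scale_parts u s t n = s * posp u n + t * negp u n"

lemma posp_scale_parts: "0 \<le> s \<Longrightarrow> 0 \<le> t \<Longrightarrow> posp (scale_parts u s t) = (\<lambda>n. s * posp u n)"
  and negp_scale_parts: "0 \<le> s \<Longrightarrow> 0 \<le> t \<Longrightarrow> negp (scale_parts u s t) = (\<lambda>n. t * negp u n)"
  by (auto simp: scale_parts_def posp_def negp_def fun_eq_iff max_def min_def
      mult_le_0_iff zero_le_mult_iff)

lemma scale_parts_uminus: "scale_parts (\<lambda>n. - u n) t s = (\<lambda>n. - scale_parts u s t n)"
  by (auto simp: scale_parts_def posp_uminus negp_uminus fun_eq_iff)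

lemma scale_parts_same: "scale_parts u t t = (\<lambda>n. t * u n)"
  unfolding scale_parts_def distrib_left[symmetric] posp_plus_negp ..

lemma fdiff_scale_parts: "fdiff (scale_parts u s t) n = s * fdiff (posp u) n + t * fdiff (negp u) n"
  by (simp add: scale_parts_def fdiff_def algebra_simps)

lemma abs_same_sign_combination_le:
  fixes y z s t K :: real
  assumes "0 \<le> y * z" "0 \<le> s" "0 \<le> t" "s \<le> K" "t \<le> K"
  shows "\<bar>s * y + t * z\<bar> \<le> K * \<bar>y + z\<bar>"
proof (cases "0 \<le> y \<and> 0 \<le> z")
  case True
  then have "s * y \<le> K * y" "t * z \<le> K * z" "0 \<le> s * y" "0 \<le> t * z"
    using assms by (auto intro: mult_right_mono)
  then show ?thesis using True by (simp add: distrib_left)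
next
  case False
  then have "y \<le> 0" "z \<le> 0" using assms(1) by (auto simp: zero_le_mult_iff)
  then have "K * y \<le> s * y" "K * z \<le> t * z" "s * y \<le> 0" "t * z \<le> 0"
    using assms by (auto intro: mult_right_mono_neg simp: mult_nonneg_nonpos)
  moreover have "\<bar>s * y + t * z\<bar> = - (s * y) - t * z" "K * \<bar>y + z\<bar> = - (K * y) - K * z"
    using \<open>y \<le> 0\<close> \<open>z \<le> 0\<close> \<open>s * y \<le> 0\<close> \<open>t * z \<le> 0\<close>
    by (simp_all add: algebra_simps)
  ultimately show ?thesis by linarith
qed

lemma abs_scale_parts_le:
  assumes "0 \<le> s" "0 \<le> t" "s \<le> K" "t \<le> K"
  shows "\<bar>fdiff (scale_parts u s t) n\<bar> \<le> K * \<bar>fdiff u n\<bar>" "\<bar>scale_parts u s t n\<bar> \<le> K * \<bar>u n\<bar>"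
proof -
  show "\<bar>fdiff (scale_parts u s t) n\<bar> \<le> K * \<bar>fdiff u n\<bar>"
    using abs_same_sign_combination_le[OF fdiff_posp_negp_same_sign assms]
    by (simp add: fdiff_scale_parts fdiff_posp_plus_negp)
  show "\<bar>scale_parts u s t n\<bar> \<le> K * \<bar>u n\<bar>"
    using assms by (cases "0 \<le> u n")
      (auto simp: scale_parts_def posp_def negp_def abs_mult intro: mult_right_mono)
qed

section \<open>The functional for even \<open>p\<close>\<close>

locale log_nehari =
  fixes p q r :: real and a b c :: "int \<Rightarrow> real" and m :: nat and b0 :: real
  assumes p_eq: "p = real m" and even_m: "even m" and m_ge_2: "2 \<le> m"
    and p_less_q: "p < q" and r_ge_1: "1 \<le> r"
    and a_pos: "\<And>n. 0 < a n" and c_pos: "\<And>n. 0 < c n"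
    and b0_pos: "0 < b0" and b_ge_b0: "\<And>n. b0 \<le> b n" and c_summable: "c summable_on UNIV"
begin

abbreviation E where "E \<equiv> spaceE p a b"
abbreviation I where "I \<equiv> funcI p q r a b c"
abbreviation I' where "I' \<equiv> dI p q r a b c"
abbreviation N where "N \<equiv> nehari p q r a b c"
abbreviation M where "M \<equiv> signnehari p q r a b c"

lemma p_gt_1: "1 < p"
  using m_ge_2 p_eq by simp

lemma q_gt_1: "1 < q"
  using p_gt_1 p_less_q by simp

lemma power_m_nonneg: "0 \<le> (x::real) ^ m"
  using even_m by (simp add: zero_le_even_power)

lemma power_m_abs: "\<bar>x::real\<bar> ^ m = x ^ m"
  using even_m by (simp add: power_even_abs)

lemma odd_pred_m: "odd (m - 1)"
  using even_m m_ge_2 by simp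

lemma power_pred_m_mult: "x ^ (m - 1) * x = (x::real) ^ m"
  using m_ge_2 by (simp add: power_Suc2[symmetric])

lemma power_pred_m_mono: "x \<le> y \<Longrightarrow> (x::real) ^ (m - 1) \<le> y ^ (m - 1)"
  using odd_pred_m by (simp add: power_mono_odd)

lemma abs_powr_p: "\<bar>x\<bar> powr p = x ^ m"
  using m_ge_2 power_m_abs[of x] by (cases "x = 0") (simp_all add: p_eq powr_realpow)

lemma abs_powr_p_minus_2: "\<bar>x\<bar> powr (p - 2) * x = x ^ (m - 1)"
proof (cases "x = 0")
  case False
  have "p - 2 = real (m - 2)" "even (m - 2)"
    using m_ge_2 even_m p_eq by auto
  then have "\<bar>x\<bar> powr (p - 2) = x ^ (m - 2)"
    using False by (simp add: powr_realpow power_even_abs)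
  moreover have "x ^ (m - 2) * x = x ^ (m - 1)"
    using m_ge_2 by (simp add: power_Suc2[symmetric] Suc_diff_Suc numeral_2_eq_2)
  ultimately show ?thesis by simp
qed (use m_ge_2 in simp)

text \<open>With \<open>p = m\<close>, \<open>normp u\<close> is \<open>\<parallel>u\<parallel>\<^sup>p\<close> and \<open>dnormp u v\<close> the first sum in
  \<open>\<langle>I'(u),v\<rangle>\<close>; \<open>qsum\<close> and \<open>logsum\<close> are the two \<open>c\<close>-weighted sums in \<open>I\<close>.\<close>

definition normp_term :: "(int \<Rightarrow> real) \<Rightarrow> int \<Rightarrow> real" where
  "normp_term u n = a n * fdiff u n ^ m + b n * u n ^ m"

definition normp :: "(int \<Rightarrow> real) \<Rightarrow> real" where
  "normp u = (\<Sum>\<^sub>\<infinity>n. normp_term u n)"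

definition qterm :: "(int \<Rightarrow> real) \<Rightarrow> int \<Rightarrow> real" where
  "qterm u n = c n * \<bar>u n\<bar> powr q"

definition qsum :: "(int \<Rightarrow> real) \<Rightarrow> real" where
  "qsum u = (\<Sum>\<^sub>\<infinity>n. qterm u n)"

definition logsum :: "(int \<Rightarrow> real) \<Rightarrow> real" where
  "logsum u = (\<Sum>\<^sub>\<infinity>n. logterm q r c u n)"

definition dnormp_term :: "(int \<Rightarrow> real) \<Rightarrow> (int \<Rightarrow> real) \<Rightarrow> int \<Rightarrow> real" where
  "dnormp_term u v n = a n * fdiff u n ^ (m - 1) * fdiff v n + b n * u n ^ (m - 1) * v n"

definition dnormp :: "(int \<Rightarrow> real) \<Rightarrow> (int \<Rightarrow> real) \<Rightarrow> real" where
  "dnormp u v = (\<Sum>\<^sub>\<infinity>n. dnormp_term u v n)"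

definition kappa :: real where
  "kappa = 1 / p - 1 / q"

lemma kappa_pos: "0 < kappa"
  unfolding kappa_def using p_less_q p_gt_1 by (simp add: field_simps)

lemma normterm_eq: "normterm p a b u = normp_term u"
  by (simp add: fun_eq_iff normterm_def normp_term_def abs_powr_p)

lemma spaceE_iff: "u \<in> E \<longleftrightarrow> normp_term u summable_on UNIV"
  by (simp add: spaceE_def normterm_eq)

lemma b0_power_le_normp_term: "b0 * u n ^ m \<le> normp_term u n"
proof -
  have "b0 * u n ^ m \<le> b n * u n ^ m"
    using b_ge_b0[of n] power_m_nonneg[of "u n"] by (intro mult_right_mono)
  moreover have "0 \<le> a n * fdiff u n ^ m"
    using a_pos[of n] power_m_nonneg[of "fdiff u n"] by simp
  ultimately show ?thesis by (simp add: normp_term_def)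
qed

lemma normp_term_nonneg: "0 \<le> normp_term u n"
  by (rule order_trans[OF mult_nonneg_nonneg b0_power_le_normp_term])
    (use b0_pos power_m_nonneg in auto)

lemma normp_nonneg: "0 \<le> normp u"
  unfolding normp_def by (rule infsum_nonneg) (simp add: normp_term_nonneg)

lemma b0_power_le_normp: "u \<in> E \<Longrightarrow> b0 * u n ^ m \<le> normp u"
  using b0_power_le_normp_term[of u n] member_le_infsum[of "normp_term u" n]
  by (simp add: spaceE_iff normp_def normp_term_nonneg)

lemma abs_le_normp_bound: "u \<in> E \<Longrightarrow> \<bar>u n\<bar> \<le> max 1 (normp u / b0)"
proof (cases "\<bar>u n\<bar> \<le> 1")
  case False
  assume "u \<in> E"
  have "\<bar>u n\<bar> ^ 1 \<le> \<bar>u n\<bar> ^ m"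
    using False m_ge_2 by (intro power_increasing) auto
  also have "\<dots> \<le> normp u / b0"
    using b0_power_le_normp[OF \<open>u \<in> E\<close>, of n] b0_pos by (simp add: power_m_abs field_simps)
  finally show ?thesis by simp
qed simp

lemma c_multiple_summable: "(\<lambda>n. K * c n) summable_on UNIV"
  using summable_on_cmult_right[OF c_summable] .

lemma abs_logterm_le:
  assumes "\<bar>u n\<bar> \<le> R" "1 \<le> R"
  shows "\<bar>logterm q r c u n\<bar> \<le> r * R powr (q + 1) * c n"
proof (cases "u n = 0")
  case False
  have "\<bar>logterm q r c u n\<bar> = r * c n * (\<bar>u n\<bar> powr q * \<bar>ln \<bar>u n\<bar>\<bar>)"
    using False c_pos[of n] r_ge_1 by (simp add: logterm_def abs_mult)
  also have "\<dots> \<le> r * c n * R powr (q + 1)"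
    using powr_mult_abs_ln_le[of "\<bar>u n\<bar>" R q] assms False c_pos[of n] r_ge_1 q_gt_1
    by (intro mult_left_mono) auto
  finally show ?thesis by (simp add: mult_ac)
qed (use c_pos[of n] r_ge_1 in \<open>simp add: logterm_def\<close>)

lemma abs_qterm_le: "\<bar>u n\<bar> \<le> R \<Longrightarrow> \<bar>qterm u n\<bar> \<le> R powr q * c n"
  using c_pos[of n] q_gt_1 powr_mono2[of q "\<bar>u n\<bar>" R]
  by (simp add: qterm_def abs_mult mult_left_mono mult.commute)

lemma logterm_summable: "u \<in> E \<Longrightarrow> logterm q r c u summable_on UNIV"
  by (rule summable_on_dominated[OF c_multiple_summable])
     (auto intro!: abs_logterm_le abs_le_normp_bound)

lemma qterm_summable: "u \<in> E \<Longrightarrow> qterm u summable_on UNIV"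
  by (rule summable_on_dominated[OF c_multiple_summable]) (auto intro!: abs_qterm_le abs_le_normp_bound)

lemma domD_eq: "domD p q r a b c = E"
  by (auto simp: domD_def logterm_summable)

lemma qterm_nonneg: "0 \<le> qterm u n"
  using c_pos[of n] by (simp add: qterm_def)

lemma qsum_nonneg: "0 \<le> qsum u"
  unfolding qsum_def by (rule infsum_nonneg) (simp add: qterm_nonneg)

lemma funcI_eq: "I u = normp u / p + r / q\<^sup>2 * qsum u - logsum u / q"
proof -
  have "normE p a b u powr p = normp u"
    unfolding normE_def normterm_eq normp_def[symmetric]
    using p_gt_1 normp_nonneg[of u] by (simp add: powr_powr)
  then show ?thesis
    by (simp add: funcI_def qsum_def qterm_def logsum_def)
qed

lemma funcI_on_nehari: "normp u = logsum u \<Longrightarrow> I u = kappa * normp u + r / q\<^sup>2 * qsum u"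
  by (simp add: funcI_eq kappa_def algebra_simps)

lemma normp_term_le_scaled:
  assumes "\<And>n. \<bar>fdiff v n\<bar> \<le> K * \<bar>fdiff u n\<bar>" "\<And>n. \<bar>v n\<bar> \<le> K * \<bar>u n\<bar>" "0 \<le> K"
  shows "normp_term v n \<le> K ^ m * normp_term u n"
proof -
  have "x ^ m \<le> K ^ m * y ^ m" if "\<bar>x\<bar> \<le> K * \<bar>y\<bar>" for x y :: real
  proof -
    have "\<bar>x\<bar> ^ m \<le> (K * \<bar>y\<bar>) ^ m"
      using that by (intro power_mono) auto
    then show ?thesis
      by (simp add: power_m_abs power_mult_distrib power_m_abs[of y])
  qed
  then have "a n * fdiff v n ^ m \<le> a n * (K ^ m * fdiff u n ^ m)"
    "b n * v n ^ m \<le> b n * (K ^ m * u n ^ m)"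
    using assms a_pos[of n] b_ge_b0[of n] b0_pos by (intro mult_left_mono; simp)+
  then show ?thesis
    by (simp add: normp_term_def algebra_simps)
qed

lemma
  assumes "u \<in> E" "\<And>n. \<bar>fdiff v n\<bar> \<le> K * \<bar>fdiff u n\<bar>" "\<And>n. \<bar>v n\<bar> \<le> K * \<bar>u n\<bar>" "0 \<le> K"
  shows spaceE_dominated: "v \<in> E" and normp_le_scaled: "normp v \<le> K ^ m * normp u"
proof -
  have sum: "(\<lambda>n. K ^ m * normp_term u n) summable_on UNIV"
    using assms(1) by (intro summable_on_cmult_right) (simp add: spaceE_iff)
  have le: "normp_term v n \<le> K ^ m * normp_term u n" for n
    by (rule normp_term_le_scaled[OF assms(2-4)])
  show v: "v \<in> E"
    unfolding spaceE_iff by (rule summable_on_dominated[OF sum]) (use le normp_term_nonneg in auto)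
  have "normp v \<le> (\<Sum>\<^sub>\<infinity>n. K ^ m * normp_term u n)"
    unfolding normp_def by (rule infsum_mono[OF _ sum le]) (use v in \<open>simp add: spaceE_iff\<close>)
  also have "\<dots> = K ^ m * normp u"
    unfolding normp_def by (rule infsum_cmult_right) (use assms(1) in \<open>simp add: spaceE_iff\<close>)
  finally show "normp v \<le> K ^ m * normp u" .
qed

lemma posp_in_E: "u \<in> E \<Longrightarrow> posp u \<in> E"
  by (rule spaceE_dominated[where u=u and K=1]) (simp_all add: abs_fdiff_posp_le abs_posp_le)

lemma negp_in_E: "u \<in> E \<Longrightarrow> negp u \<in> E"
  by (rule spaceE_dominated[where u=u and K=1]) (simp_all add: abs_fdiff_negp_le abs_negp_le)

lemma uminus_in_E: "u \<in> E \<Longrightarrow> (\<lambda>n. - u n) \<in> E"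
  by (rule spaceE_dominated[where u=u and K=1]) (simp_all add: fdiff_uminus)

lemma cmult_in_E: "u \<in> E \<Longrightarrow> (\<lambda>n. s * u n) \<in> E"
  by (rule spaceE_dominated[where u=u and K="\<bar>s\<bar>"]) (simp_all add: fdiff_cmult abs_mult)

lemma scale_parts_in_E: "u \<in> E \<Longrightarrow> 0 \<le> s \<Longrightarrow> 0 \<le> t \<Longrightarrow> scale_parts u s t \<in> E"
  by (rule spaceE_dominated[where u=u and K="max s t"]) (auto intro!: abs_scale_parts_le)

lemma
  assumes "u \<in> E" "0 \<le> s" "s \<le> 1" "0 \<le> t" "t \<le> 1"
  shows normp_scale_parts_le: "normp (scale_parts u s t) \<le> normp u"
    and qsum_scale_parts_le: "qsum (scale_parts u s t) \<le> qsum u"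
proof -
  show "normp (scale_parts u s t) \<le> normp u"
    using normp_le_scaled[OF assms(1), of _ 1] abs_scale_parts_le[of s t 1] assms by simp
  have "qterm (scale_parts u s t) n \<le> qterm u n" for n
  proof -
    have "\<bar>scale_parts u s t n\<bar> powr q \<le> \<bar>u n\<bar> powr q"
      using abs_scale_parts_le(2)[of s t 1 u n] assms q_gt_1 by (intro powr_mono2) auto
    then show ?thesis
      unfolding qterm_def using c_pos[of n] by (intro mult_left_mono) auto
  qed
  then show "qsum (scale_parts u s t) \<le> qsum u"
    unfolding qsum_def using assms
    by (intro infsum_mono qterm_summable scale_parts_in_E) auto
qed

lemma logterm_of_part:
  assumes "v n = u n \<or> v n = 0"
  shows "(if u n = 0 then 0 else c n * \<bar>u n\<bar> powr (q - 2) * u n * v n * ln (\<bar>u n\<bar> powr r))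
    = logterm q r c v n"
proof (cases "u n = 0 \<or> v n = 0")
  case False
  then have "v n = u n" using assms by auto
  moreover have "u n * u n = \<bar>u n\<bar> powr 2"
    using False by (simp add: power2_eq_square)
  then have "\<bar>u n\<bar> powr (q - 2) * u n * u n = \<bar>u n\<bar> powr (q - 2 + 2)"
    unfolding powr_add by (simp only: mult.assoc)
  ultimately show ?thesis
    using False by (simp add: logterm_def mult_ac)
qed (use assms in \<open>auto simp: logterm_def\<close>)

lemma dI_part:
  assumes "\<And>n. v n = u n \<or> v n = 0"
  shows "I' u v = dnormp u v - logsum v"
proof -
  have powr_eq: "w * \<bar>x\<bar> powr (p - 2) * x * y = w * x ^ (m - 1) * y" for w x y :: real
    using abs_powr_p_minus_2[of x] by (metis mult.assoc)
  have "(\<lambda>n. a n * \<bar>fdiff u n\<bar> powr (p - 2) * fdiff u n * fdiff v n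
      + b n * \<bar>u n\<bar> powr (p - 2) * u n * v n) = dnormp_term u v"
    by (simp add: fun_eq_iff dnormp_term_def powr_eq)
  moreover have "(\<lambda>n. if u n = 0 then 0 else c n * \<bar>u n\<bar> powr (q - 2) * u n * v n * ln (\<bar>u n\<bar> powr r))
      = logterm q r c v"
    by (simp add: fun_eq_iff logterm_of_part assms)
  ultimately show ?thesis
    by (simp add: dI_def dnormp_def logsum_def)
qed

lemma dnormp_term_self: "dnormp_term u u n = normp_term u n"
  unfolding dnormp_term_def normp_term_def mult.assoc power_pred_m_mult ..

lemma dI_self: "I' u u = normp u - logsum u"
  using dI_part[of u u] by (simp add: dnormp_def normp_def dnormp_term_self)

lemma dI_posp: "I' u (posp u) = dnormp u (posp u) - logsum (posp u)"
  by (rule dI_part) (simp add: posp_def max_def)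

lemma dI_negp: "I' u (negp u) = dnormp u (negp u) - logsum (negp u)"
  by (rule dI_part) (simp add: negp_def min_def)

lemma abs_dnormp_term_le:
  assumes "\<bar>fdiff w n\<bar> \<le> \<bar>fdiff u n\<bar>" "\<bar>fdiff v n\<bar> \<le> \<bar>fdiff u n\<bar>" "\<bar>w n\<bar> \<le> \<bar>u n\<bar>" "\<bar>v n\<bar> \<le> \<bar>u n\<bar>"
  shows "\<bar>dnormp_term w v n\<bar> \<le> normp_term u n"
proof -
  have bound: "\<bar>x ^ (m - 1) * y\<bar> \<le> z ^ m" if "\<bar>x\<bar> \<le> \<bar>z\<bar>" "\<bar>y\<bar> \<le> \<bar>z\<bar>" for x y z :: real
  proof -
    have "\<bar>x ^ (m - 1) * y\<bar> = \<bar>x\<bar> ^ (m - 1) * \<bar>y\<bar>"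
      by (simp add: abs_mult power_abs)
    also have "\<dots> \<le> \<bar>z\<bar> ^ (m - 1) * \<bar>z\<bar>"
      using that by (intro mult_mono power_mono) auto
    also have "\<dots> = z ^ m"
      unfolding power_pred_m_mult power_m_abs ..
    finally show ?thesis .
  qed
  have "\<bar>a n * fdiff w n ^ (m - 1) * fdiff v n\<bar> \<le> a n * fdiff u n ^ m"
    "\<bar>b n * w n ^ (m - 1) * v n\<bar> \<le> b n * u n ^ m"
    using bound[OF assms(1,2)] bound[OF assms(3,4)] a_pos[of n] b_ge_b0[of n] b0_pos
    by (simp_all add: abs_mult mult.assoc mult_left_mono)
  then show ?thesis
    unfolding dnormp_term_def normp_term_def by linarith
qed

lemma dnormp_term_summable:
  assumes "u \<in> E" "\<And>n. \<bar>fdiff w n\<bar> \<le> \<bar>fdiff u n\<bar>" "\<And>n. \<bar>fdiff v n\<bar> \<le> \<bar>fdiff u n\<bar>"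
    "\<And>n. \<bar>w n\<bar> \<le> \<bar>u n\<bar>" "\<And>n. \<bar>v n\<bar> \<le> \<bar>u n\<bar>"
  shows "dnormp_term w v summable_on UNIV"
  by (rule summable_on_dominated[of "normp_term u"])
     (use assms spaceE_iff abs_dnormp_term_le in auto)

lemma dnormp_term_posp_summable: "u \<in> E \<Longrightarrow> dnormp_term u (posp u) summable_on UNIV"
  by (rule dnormp_term_summable[where u=u]) (simp_all add: abs_fdiff_posp_le abs_posp_le)

lemma dnormp_term_negp_summable: "u \<in> E \<Longrightarrow> dnormp_term u (negp u) summable_on UNIV"
  by (rule dnormp_term_summable[where u=u]) (simp_all add: abs_fdiff_negp_le abs_negp_le)

lemma dI_split: "u \<in> E \<Longrightarrow> I' u u = I' u (posp u) + I' u (negp u)"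
proof -
  assume u: "u \<in> E"
  have "dnormp_term u (posp u) n + dnormp_term u (negp u) n
      = a n * fdiff u n ^ (m - 1) * (fdiff (posp u) n + fdiff (negp u) n)
      + b n * u n ^ (m - 1) * (posp u n + negp u n)" for n
    unfolding dnormp_term_def by (simp add: algebra_simps)
  then have "dnormp_term u u = (\<lambda>n. dnormp_term u (posp u) n + dnormp_term u (negp u) n)"
    by (simp add: fun_eq_iff fdiff_posp_plus_negp posp_plus_negp dnormp_term_def)
  moreover have "logterm q r c u = (\<lambda>n. logterm q r c (posp u) n + logterm q r c (negp u) n)"
    by (auto simp: fun_eq_iff logterm_def posp_def negp_def)
  ultimately have "dnormp u u = dnormp u (posp u) + dnormp u (negp u)"
    "logsum u = logsum (posp u) + logsum (negp u)"
    unfolding dnormp_def logsum_def using u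
    by (simp_all add: infsum_add dnormp_term_posp_summable dnormp_term_negp_summable
        logterm_summable posp_in_E negp_in_E)
  then show ?thesis
    using dI_part[of u u] by (simp add: dI_posp dI_negp)
qed

lemma power_m_le_same_sign:
  fixes y z :: real
  assumes "0 \<le> y * z"
  shows "y ^ m \<le> (y + z) ^ (m - 1) * y"
proof (cases "0 \<le> y")
  case True
  with assms have "0 \<le> z \<or> y = 0" by (auto simp: zero_le_mult_iff)
  then show ?thesis
  proof
    assume "0 \<le> z"
    then have "y ^ (m - 1) * y \<le> (y + z) ^ (m - 1) * y"
      using True by (intro mult_right_mono power_pred_m_mono) auto
    then show ?thesis by (simp only: power_pred_m_mult)
  qed (use m_ge_2 in \<open>simp add: power_0_left\<close>)
next
  case False
  with assms have "z \<le> 0" by (auto simp: zero_le_mult_iff)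
  then have "y ^ (m - 1) * y \<le> (y + z) ^ (m - 1) * y"
    using False by (intro mult_right_mono_neg power_pred_m_mono) auto
  then show ?thesis by (simp only: power_pred_m_mult)
qed

lemma normp_term_posp_le: "normp_term (posp u) n \<le> dnormp_term u (posp u) n"
proof -
  have "fdiff (posp u) n ^ m \<le> fdiff u n ^ (m - 1) * fdiff (posp u) n"
    using power_m_le_same_sign[OF fdiff_posp_negp_same_sign[of u n]]
    by (simp add: fdiff_posp_plus_negp)
  moreover have "u n ^ (m - 1) * posp u n = posp u n ^ m"
    using m_ge_2 power_pred_m_mult[of "u n"] by (cases "0 \<le> u n") (auto simp: posp_def)
  ultimately show ?thesis
    using a_pos[of n] by (simp add: normp_term_def dnormp_term_def mult.assoc)
qed

lemma normp_posp_le: "u \<in> E \<Longrightarrow> normp (posp u) \<le> dnormp u (posp u)"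
  unfolding normp_def dnormp_def using posp_in_E[of u]
  by (intro infsum_mono) (simp_all add: spaceE_iff dnormp_term_posp_summable normp_term_posp_le)

lemma dnormp_term_uminus: "dnormp_term (\<lambda>n. - u n) (\<lambda>n. - v n) n = dnormp_term u v n"
  using odd_pred_m by (simp add: dnormp_term_def fdiff_uminus)

lemma logsum_uminus: "logsum (\<lambda>n. - u n) = logsum u"
proof -
  have "logterm q r c (\<lambda>n. - u n) = logterm q r c u"
    by (simp add: fun_eq_iff logterm_def)
  then show ?thesis by (simp add: logsum_def)
qed

lemma dI_negp_eq: "I' u (negp u) = I' (\<lambda>n. - u n) (posp (\<lambda>n. - u n))"
proof -
  have "I' (\<lambda>n. - u n) (posp (\<lambda>n. - u n))
      = dnormp (\<lambda>n. - u n) (posp (\<lambda>n. - u n)) - logsum (posp (\<lambda>n. - u n))"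
    by (rule dI_posp)
  also have "\<dots> = dnormp u (negp u) - logsum (negp u)"
    unfolding posp_uminus dnormp_def dnormp_term_uminus logsum_uminus ..
  finally show ?thesis by (simp add: dI_negp)
qed

lemma normp_cmult: "u \<in> E \<Longrightarrow> normp (\<lambda>n. s * u n) = s ^ m * normp u"
proof -
  have "normp_term (\<lambda>n. s * u n) n = s ^ m * normp_term u n" for n
    by (simp add: normp_term_def fdiff_cmult algebra_simps)
  then show "u \<in> E \<Longrightarrow> ?thesis"
    by (simp add: normp_def spaceE_iff infsum_cmult_right)
qed

lemma logsum_cmult:
  assumes "u \<in> E" "0 < s"
  shows "logsum (\<lambda>n. s * u n) = s powr q * (logsum u + r * ln s * qsum u)"
proof -
  have "logterm q r c (\<lambda>n. s * u n) n = s powr q * (logterm q r c u n + r * ln s * qterm u n)" for n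
    using assms(2)
    by (cases "u n = 0") (simp_all add: logterm_def qterm_def abs_mult powr_mult ln_mult
        algebra_simps)
  moreover have "logterm q r c u summable_on UNIV" "qterm u summable_on UNIV"
    using assms(1) by (simp_all add: logterm_summable qterm_summable)
  ultimately show ?thesis
    by (simp add: logsum_def qsum_def infsum_cmult_right infsum_add summable_on_add
        summable_on_cmult_right)
qed

lemma dI_cmult_posp:
  assumes "v \<in> E" "0 < x"
  shows "I' (\<lambda>n. x * v n) (posp (\<lambda>n. x * v n))
    = x ^ m * dnormp v (posp v) - x powr q * (logsum (posp v) + r * ln x * qsum (posp v))"
proof -
  have "dnormp_term (\<lambda>n. x * v n) (\<lambda>n. x * posp v n) n = x ^ m * dnormp_term v (posp v) n" for n
  proof -
    have scale: "(x * y) ^ (m - 1) * (x * z) = x ^ m * (y ^ (m - 1) * z)" for y z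
      unfolding power_mult_distrib power_pred_m_mult[of x, symmetric] by (simp only: mult_ac)
    show ?thesis
      unfolding dnormp_term_def fdiff_cmult mult.assoc scale by (simp add: algebra_simps)
  qed
  then have "dnormp (\<lambda>n. x * v n) (\<lambda>n. x * posp v n) = x ^ m * dnormp v (posp v)"
    using assms(1) by (simp add: dnormp_def infsum_cmult_right dnormp_term_posp_summable)
  then show ?thesis
    using assms unfolding dI_posp by (simp add: posp_cmult logsum_cmult posp_in_E)
qed

lemma normp_pos: "u \<in> E \<Longrightarrow> u \<noteq> (\<lambda>_. 0) \<Longrightarrow> 0 < normp u"
proof -
  assume "u \<in> E" "u \<noteq> (\<lambda>_. 0)"
  then obtain n where "u n \<noteq> 0" by auto
  then have "0 < b0 * u n ^ m"
    using b0_pos even_m by (simp add: zero_less_power_eq)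
  also have "\<dots> \<le> normp u"
    by (rule b0_power_le_normp[OF \<open>u \<in> E\<close>])
  finally show ?thesis .
qed

lemma qsum_pos: "u \<in> E \<Longrightarrow> u \<noteq> (\<lambda>_. 0) \<Longrightarrow> 0 < qsum u"
proof -
  assume "u \<in> E" "u \<noteq> (\<lambda>_. 0)"
  then obtain n where "u n \<noteq> 0" by auto
  then have "0 < qterm u n"
    using c_pos[of n] by (simp add: qterm_def)
  also have "\<dots> \<le> qsum u"
    unfolding qsum_def using \<open>u \<in> E\<close>
    by (intro member_le_infsum qterm_summable qterm_nonneg)
  finally show ?thesis .
qed

lemma logsum_zero_one: "(\<And>n. v n = 0 \<or> v n = 1) \<Longrightarrow> logsum v = 0"
proof -
  assume "\<And>n. v n = 0 \<or> v n = 1"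
  then have "logterm q r c v n = 0" for n
    by (auto simp: logterm_def dest: meta_spec[of _ n])
  then show ?thesis
    by (simp add: logsum_def)
qed

lemma b0_le_normp:
  assumes "v \<in> E" "v \<noteq> (\<lambda>_. 0)" "normp v \<le> logsum v"
  shows "b0 \<le> normp v"
proof (rule ccontr)
  assume "\<not> b0 \<le> normp v"
  have lt1: "\<bar>v n\<bar> < 1" for n
  proof (rule ccontr)
    assume "\<not> \<bar>v n\<bar> < 1"
    then have "b0 \<le> b0 * v n ^ m"
      using b0_pos one_le_power[of "\<bar>v n\<bar>" m] by (simp add: power_m_abs)
    also have "\<dots> \<le> normp v"
      by (rule b0_power_le_normp[OF assms(1)])
    finally show False using \<open>\<not> b0 \<le> normp v\<close> by simp
  qed
  have "logterm q r c v n \<le> 0" for n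
  proof (cases "v n = 0")
    case False
    then have "r * ln \<bar>v n\<bar> \<le> 0"
      using lt1[of n] r_ge_1 by (simp add: mult_nonneg_nonpos)
    then show ?thesis
      using False c_pos[of n] by (simp add: logterm_def mult_nonneg_nonpos)
  qed (simp add: logterm_def)
  then have "0 \<le> (\<Sum>\<^sub>\<infinity>n. - logterm q r c v n)"
    by (intro infsum_nonneg) auto
  then have "logsum v \<le> 0"
    by (simp add: logsum_def infsum_uminus)
  then show False
    using normp_pos[OF assms(1,2)] assms(3) by simp
qed

lemma nehari_iff: "u \<in> N \<longleftrightarrow> u \<in> E \<and> u \<noteq> (\<lambda>_. 0) \<and> normp u = logsum u"
  by (auto simp: nehari_def domD_eq dI_self)

lemma signnehari_iff: "u \<in> M \<longleftrightarrow> u \<in> E \<and> posp u \<noteq> (\<lambda>_. 0) \<and> negp u \<noteq> (\<lambda>_. 0)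
    \<and> I' u (posp u) = 0 \<and> I' u (negp u) = 0"
  by (simp add: signnehari_def domD_eq)

lemma signnehari_subset_nehari: "M \<subseteq> N"
proof
  fix u assume "u \<in> M"
  moreover have "posp (\<lambda>_. 0) = (\<lambda>_. 0 :: real)" by (simp add: posp_def fun_eq_iff)
  ultimately show "u \<in> N"
    unfolding signnehari_iff nehari_iff using dI_split[of u] dI_self[of u] by auto
qed

lemma funcI_nehari_ge: "u \<in> N \<Longrightarrow> kappa * b0 \<le> I u"
proof -
  assume "u \<in> N"
  then have "u \<in> E" "u \<noteq> (\<lambda>_. 0)" "normp u = logsum u"
    by (auto simp: nehari_iff)
  then have "b0 \<le> normp u"
    by (intro b0_le_normp) simp_all
  then have "kappa * b0 \<le> kappa * normp u"
    using kappa_pos by simp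
  moreover have "0 \<le> r / q\<^sup>2 * qsum u"
    using qsum_nonneg r_ge_1 by simp
  ultimately show ?thesis
    using funcI_on_nehari[OF \<open>normp u = logsum u\<close>] by simp
qed

lemma bdd_below_nehari: "X \<subseteq> N \<Longrightarrow> bdd_below (I ` X)"
  by (rule bdd_belowI2[where m="kappa * b0"]) (use funcI_nehari_ge in auto)

lemma Inf_nehari_ge: "X \<subseteq> N \<Longrightarrow> X \<noteq> {} \<Longrightarrow> kappa * b0 \<le> Inf (I ` X)"
  by (rule cInf_greatest) (use funcI_nehari_ge in auto)

section \<open>Projections onto the Nehari sets\<close>

lemma small_scale:
  assumes "0 \<le> K"
  obtains e where "0 < e" "e < 1" "e ^ m * K < b0"
proof
  define e where "e = min (1/2) (b0 / (K + 1))"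
  show "0 < e" "e < 1"
    using b0_pos assms by (auto simp: e_def)
  have "e ^ m \<le> e ^ 1"
    using \<open>0 < e\<close> \<open>e < 1\<close> m_ge_2 by (intro power_decreasing) auto
  then have "e ^ m * K \<le> e * K"
    using assms by (simp add: mult_right_mono)
  also have "\<dots> \<le> b0 / (K + 1) * K"
    using assms by (intro mult_right_mono) (auto simp: e_def)
  also have "\<dots> < b0"
    using assms b0_pos by (simp add: field_simps)
  finally show "e ^ m * K < b0" .
qed

lemma nehari_projection:
  assumes u: "u \<in> E" "u \<noteq> (\<lambda>_. 0)" and le: "normp u \<le> logsum u"
  obtains t where "0 < t" "t \<le> 1" "(\<lambda>n. t * u n) \<in> N"
proof -
  define g where "g t = t ^ m * normp u - t powr q * (logsum u + r * ln t * qsum u)" for t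
  have g_eq: "normp (\<lambda>n. t * u n) - logsum (\<lambda>n. t * u n) = g t" if "0 < t" for t
    using normp_cmult[OF u(1)] logsum_cmult[OF u(1) that] by (simp add: g_def)
  obtain e where e: "0 < e" "e < 1" "e ^ m * normp u < b0"
    using small_scale[OF normp_nonneg] by blast
  have "0 < g e"
  proof (rule ccontr)
    assume "\<not> 0 < g e"
    then have "b0 \<le> normp (\<lambda>n. e * u n)"
      using g_eq[OF e(1)] u(2) e(1)
      by (intro b0_le_normp cmult_in_E u(1)) (auto simp: fun_eq_iff)
    then show False
      using e(3) normp_cmult[OF u(1)] by simp
  qed
  moreover have "g 1 \<le> 0"
    using le by (simp add: g_def)
  moreover have "continuous_on {e..1} g"
    unfolding g_def using e(1) by (intro continuous_intros) auto
  ultimately obtain t where t: "e \<le> t" "t \<le> 1" "g t = 0"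
    using IVT2'[of g 1 0 e] e(2) by auto
  with e(1) have "0 < t" by simp
  moreover have "(\<lambda>n. t * u n) \<in> N"
    unfolding nehari_iff using cmult_in_E[OF u(1)] g_eq[OF \<open>0 < t\<close>] t(3) u(2) \<open>0 < t\<close>
    by (auto simp: fun_eq_iff)
  ultimately show thesis
    using t(2) that by blast
qed

definition fibre_pos_deriv :: "(int \<Rightarrow> real) \<Rightarrow> real \<times> real \<Rightarrow> real" where
  "fibre_pos_deriv u z = I' (scale_parts u (fst z) (snd z)) (posp (scale_parts u (fst z) (snd z)))"

lemma fibre_pos_deriv_eq:
  assumes "u \<in> E" "0 < s" "0 \<le> t"
  shows "fibre_pos_deriv u (s, t) = dnormp (scale_parts u s t) (\<lambda>n. s * posp u n)
    - s powr q * (logsum (posp u) + r * ln s * qsum (posp u))"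
  using assms unfolding fibre_pos_deriv_def fst_conv snd_conv dI_posp
  by (simp add: posp_scale_parts logsum_cmult posp_in_E)

lemma continuous_on_dnormp_scale_parts:
  assumes u: "u \<in> E" and S: "S \<subseteq> {0..1} \<times> {0..1}"
  shows "continuous_on S (\<lambda>z. dnormp (scale_parts u (fst z) (snd z)) (\<lambda>n. fst z * posp u n))"
  unfolding continuous_on_def dnormp_def
proof (intro ballI infsum_dominated_convergence)
  show "normp_term u summable_on UNIV"
    using u by (simp add: spaceE_iff)
  have bound: "\<bar>dnormp_term (scale_parts u (fst z) (snd z)) (\<lambda>n. fst z * posp u n) n\<bar> \<le> normp_term u n"
    if "z \<in> S" for z n
  proof (rule abs_dnormp_term_le)
    have "0 \<le> fst z" "fst z \<le> 1" "0 \<le> snd z" "snd z \<le> 1"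
      using S that by auto
    then show "\<bar>fdiff (scale_parts u (fst z) (snd z)) n\<bar> \<le> \<bar>fdiff u n\<bar>"
      "\<bar>scale_parts u (fst z) (snd z) n\<bar> \<le> \<bar>u n\<bar>"
      "\<bar>fdiff (\<lambda>n. fst z * posp u n) n\<bar> \<le> \<bar>fdiff u n\<bar>"
      "\<bar>fst z * posp u n\<bar> \<le> \<bar>u n\<bar>"
      using abs_scale_parts_le[of "fst z" "snd z" 1 u n] abs_fdiff_posp_le[of u n] abs_posp_le[of u n]
      by (auto simp: fdiff_cmult abs_mult intro: mult_le_one order_trans[OF mult_left_le_one_le])
  qed
  fix z assume "z \<in> S"
  then show "\<bar>dnormp_term (scale_parts u (fst z) (snd z)) (\<lambda>n. fst z * posp u n) n\<bar> \<le> normp_term u n"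
    for n by (rule bound)
  show "\<forall>\<^sub>F z' in at z within S. \<forall>n.
      \<bar>dnormp_term (scale_parts u (fst z') (snd z')) (\<lambda>n. fst z' * posp u n) n\<bar> \<le> normp_term u n"
    using bound by (auto simp: eventually_at_filter)
  show "((\<lambda>z'. dnormp_term (scale_parts u (fst z') (snd z')) (\<lambda>n. fst z' * posp u n) n) \<longlongrightarrow>
      dnormp_term (scale_parts u (fst z) (snd z)) (\<lambda>n. fst z * posp u n) n) (at z within S)" for n
    unfolding dnormp_term_def fdiff_scale_parts fdiff_cmult scale_parts_def by (intro tendsto_intros)
qed

lemma continuous_on_fibre_pos_deriv:
  assumes "u \<in> E" "0 < e"
  shows "continuous_on ({e..1} \<times> {e..1}) (fibre_pos_deriv u)"
proof -
  have "continuous_on ({e..1} \<times> {e..1}) (\<lambda>z. dnormp (scale_parts u (fst z) (snd z)) (\<lambda>n. fst z * posp u n)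
      - fst z powr q * (logsum (posp u) + r * ln (fst z) * qsum (posp u)))"
    using assms by (intro continuous_intros continuous_on_dnormp_scale_parts) auto
  then show ?thesis
    by (rule continuous_on_eq) (use assms fibre_pos_deriv_eq in auto)
qed

lemma fibre_pos_deriv_pos:
  assumes u: "u \<in> E" "posp u \<noteq> (\<lambda>_. 0)" and s: "0 < s" "s ^ m * normp (posp u) < b0" and "0 \<le> t"
  shows "0 < fibre_pos_deriv u (s, t)"
proof -
  let ?W = "scale_parts u s t"
  have pW: "posp ?W = (\<lambda>n. s * posp u n)"
    using s \<open>0 \<le> t\<close> by (simp add: posp_scale_parts)
  have "posp ?W \<in> E" "posp ?W \<noteq> (\<lambda>_. 0)" "normp (posp ?W) < b0"
    using u s cmult_in_E[OF posp_in_E[OF u(1)]] normp_cmult[OF posp_in_E[OF u(1)]]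
    by (auto simp: pW fun_eq_iff)
  then have "logsum (posp ?W) < normp (posp ?W)"
    using b0_le_normp[of "posp ?W"] by fastforce
  also have "\<dots> \<le> dnormp ?W (posp ?W)"
    using scale_parts_in_E[OF u(1)] s \<open>0 \<le> t\<close> by (intro normp_posp_le) auto
  finally show ?thesis
    unfolding fibre_pos_deriv_def fst_conv snd_conv dI_posp by simp
qed

lemma pred_power_mult_shrink_le:
  fixes y z t :: real
  assumes "0 \<le> y * z" "0 \<le> t" "t \<le> 1"
  shows "(y + t * z) ^ (m - 1) * y \<le> (y + z) ^ (m - 1) * y"
proof (cases "0 \<le> y")
  case True
  with assms have "0 \<le> z \<or> y = 0" by (auto simp: zero_le_mult_iff)
  then show ?thesis
  proof
    assume "0 \<le> z"
    then have "t * z \<le> z" using assms by (simp add: mult_left_le_one_le)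
    then show ?thesis
      using True by (intro mult_right_mono power_pred_m_mono) auto
  qed simp
next
  case False
  with assms have "z \<le> 0" by (auto simp: zero_le_mult_iff)
  then have "z \<le> t * z"
    using mult_right_mono_neg[of t 1 z] assms by simp
  then show ?thesis
    using False by (intro mult_right_mono_neg power_pred_m_mono) auto
qed

lemma fibre_pos_deriv_one_le:
  assumes u: "u \<in> E" and t: "0 \<le> t" "t \<le> 1"
  shows "fibre_pos_deriv u (1, t) \<le> I' u (posp u)"
proof -
  have "dnormp_term (scale_parts u 1 t) (posp u) n \<le> dnormp_term u (posp u) n" for n
  proof -
    have "a n * (fdiff (scale_parts u 1 t) n ^ (m - 1) * fdiff (posp u) n)
        \<le> a n * (fdiff u n ^ (m - 1) * fdiff (posp u) n)"
      using pred_power_mult_shrink_le[OF fdiff_posp_negp_same_sign t] a_pos[of n]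
      by (intro mult_left_mono) (auto simp: fdiff_scale_parts fdiff_posp_plus_negp[of u n, symmetric])
    moreover have "b n * (scale_parts u 1 t n ^ (m - 1) * posp u n) = b n * (u n ^ (m - 1) * posp u n)"
      by (cases "0 \<le> u n") (auto simp: scale_parts_def posp_def negp_def)
    ultimately show ?thesis
      unfolding dnormp_term_def mult.assoc by linarith
  qed
  then have "dnormp (scale_parts u 1 t) (posp u) \<le> dnormp u (posp u)"
    unfolding dnormp_def using t abs_scale_parts_le[of 1 t 1 u]
    by (intro infsum_mono dnormp_term_summable[OF u] dnormp_term_posp_summable[OF u])
      (auto simp: abs_fdiff_posp_le abs_posp_le)
  then show ?thesis
    using t unfolding fibre_pos_deriv_def fst_conv snd_conv dI_posp by (simp add: posp_scale_parts)
qed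

lemma fibre_pos_deriv_common_zero:
  assumes u: "u \<in> E" "posp u \<noteq> (\<lambda>_. 0)" "I' u (posp u) \<le> 0"
    and v: "v \<in> E" "posp v \<noteq> (\<lambda>_. 0)" "I' v (posp v) \<le> 0"
  obtains s t where "0 < s" "s \<le> 1" "0 < t" "t \<le> 1"
    "fibre_pos_deriv u (s, t) = 0" "fibre_pos_deriv v (t, s) = 0"
proof -
  define K where "K = normp (posp u) + normp (posp v)"
  obtain e where e: "0 < e" "e < 1" "e ^ m * K < b0"
    using small_scale[of K] normp_nonneg by (auto simp: K_def)
  have "e ^ m * normp (posp u) \<le> e ^ m * K" "e ^ m * normp (posp v) \<le> e ^ m * K"
    using e(1) normp_nonneg by (simp_all add: K_def mult_left_mono)
  then have small: "e ^ m * normp (posp u) < b0" "e ^ m * normp (posp v) < b0"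
    using e(3) by linarith+
  let ?S = "{e..1} \<times> {e..1}"
  have "continuous_on ?S (\<lambda>z. (snd z, fst z))"
    by (intro continuous_intros)
  then have "continuous_on ?S (\<lambda>z. fibre_pos_deriv v (snd z, fst z))"
    by (rule continuous_on_compose2[OF continuous_on_fibre_pos_deriv[OF v(1) e(1)]]) auto
  then obtain s t where st: "s \<in> {e..1}" "t \<in> {e..1}"
    "fibre_pos_deriv u (s, t) = 0" "fibre_pos_deriv v (t, s) = 0"
  proof (rule Poincare_Miranda_square[OF e(2) continuous_on_fibre_pos_deriv[OF u(1) e(1)]])
    show "0 < fibre_pos_deriv u (e, t)" "0 < fibre_pos_deriv v (snd (t, e), fst (t, e))"
      if "t \<in> {e..1}" for t
      using that fibre_pos_deriv_pos[OF u(1,2) e(1) small(1), of t]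
        fibre_pos_deriv_pos[OF v(1,2) e(1) small(2), of t] e(1) by simp_all
    show "fibre_pos_deriv u (1, t) \<le> 0" "fibre_pos_deriv v (snd (t, 1), fst (t, 1)) \<le> 0"
      if "t \<in> {e..1}" for t
      using fibre_pos_deriv_one_le[OF u(1), of t] fibre_pos_deriv_one_le[OF v(1), of t]
        u(3) v(3) that e(1) by simp_all
  qed (simp add: that)
  show thesis
    using st e(1) by (intro that[of s t]) auto
qed

lemma signnehari_projection:
  assumes u: "u \<in> E" "posp u \<noteq> (\<lambda>_. 0)" "negp u \<noteq> (\<lambda>_. 0)"
    and pos_le: "I' u (posp u) \<le> 0" and neg_le: "I' u (negp u) \<le> 0"
  obtains s t where "0 < s" "s \<le> 1" "0 < t" "t \<le> 1" "scale_parts u s t \<in> M"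
proof -
  \<comment> \<open>The negative part of \<open>u\<close> is the positive part of \<open>v = -u\<close>,
    with \<open>s\<close> and \<open>t\<close> swapped.\<close>
  define v where "v = (\<lambda>n. - u n)"
  have v: "v \<in> E" "posp v \<noteq> (\<lambda>_. 0)" "I' v (posp v) \<le> 0"
    using uminus_in_E[OF u(1)] u(3) neg_le dI_negp_eq[of u]
    by (auto simp: v_def posp_uminus fun_eq_iff)
  obtain s t where st: "0 < s" "s \<le> 1" "0 < t" "t \<le> 1"
    "fibre_pos_deriv u (s, t) = 0" "fibre_pos_deriv v (t, s) = 0"
    using fibre_pos_deriv_common_zero[OF u(1,2) pos_le v] .
  let ?W = "scale_parts u s t"
  have "I' ?W (posp ?W) = 0"
    using st(5) by (simp add: fibre_pos_deriv_def)
  moreover have "I' ?W (negp ?W) = 0"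
    using st(6) by (simp add: fibre_pos_deriv_def v_def scale_parts_uminus dI_negp_eq)
  moreover have "posp ?W \<noteq> (\<lambda>_. 0)" "negp ?W \<noteq> (\<lambda>_. 0)"
    using u(2,3) st by (auto simp: posp_scale_parts negp_scale_parts fun_eq_iff)
  ultimately have "?W \<in> M"
    using scale_parts_in_E[OF u(1)] st by (simp add: signnehari_iff)
  with st(1-4) show thesis
    by (rule that)
qed

section \<open>Existence of minimisers\<close>

lemma logterm_eq: "logterm q r c u n = r * c n * (if u n = 0 then 0 else \<bar>u n\<bar> powr q * ln \<bar>u n\<bar>)"
  by (simp add: logterm_def)

lemma
  assumes bound: "\<And>k n. \<bar>w k n\<bar> \<le> R" and "1 \<le> R" and lim: "\<And>n. (\<lambda>k. w k n) \<longlonglongrightarrow> v n"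
  shows tendsto_qsum: "(\<lambda>k. qsum (w k)) \<longlonglongrightarrow> qsum v"
    and tendsto_logsum: "(\<lambda>k. logsum (w k)) \<longlonglongrightarrow> logsum v"
proof -
  have v_bound: "\<bar>v n\<bar> \<le> R" for n
    by (rule tendsto_upperbound[OF tendsto_rabs[OF lim]]) (simp_all add: bound)
  show "(\<lambda>k. qsum (w k)) \<longlonglongrightarrow> qsum v"
    unfolding qsum_def
  proof (rule infsum_dominated_convergence[OF c_multiple_summable])
    show "\<forall>\<^sub>F k in sequentially. \<forall>n. \<bar>qterm (w k) n\<bar> \<le> R powr q * c n"
      using abs_qterm_le bound by auto
    show "\<bar>qterm v n\<bar> \<le> R powr q * c n" for n
      using abs_qterm_le v_bound by auto
    show "(\<lambda>k. qterm (w k) n) \<longlonglongrightarrow> qterm v n" for n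
      unfolding qterm_def using q_gt_1 by (intro tendsto_intros lim) auto
  qed
  show "(\<lambda>k. logsum (w k)) \<longlonglongrightarrow> logsum v"
    unfolding logsum_def
  proof (rule infsum_dominated_convergence[OF c_multiple_summable])
    show "\<forall>\<^sub>F k in sequentially. \<forall>n. \<bar>logterm q r c (w k) n\<bar> \<le> r * R powr (q + 1) * c n"
      using abs_logterm_le bound \<open>1 \<le> R\<close> by auto
    show "\<bar>logterm q r c v n\<bar> \<le> r * R powr (q + 1) * c n" for n
      using abs_logterm_le v_bound \<open>1 \<le> R\<close> by auto
    show "(\<lambda>k. logterm q r c (w k) n) \<longlonglongrightarrow> logterm q r c v n" for n
      unfolding logterm_eq by (intro tendsto_intros tendsto_abs_powr_mult_ln q_gt_1 lim)
  qed
qed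

lemma normp_Fatou:
  assumes "\<And>k. w k \<in> E" "\<And>n. (\<lambda>k. w k n) \<longlonglongrightarrow> v n" "(\<lambda>k. normp (w k)) \<longlonglongrightarrow> l"
  shows "v \<in> E" "normp v \<le> l"
proof -
  have "(\<lambda>k. normp_term (w k) n) \<longlonglongrightarrow> normp_term v n" for n
    unfolding normp_term_def fdiff_def by (intro tendsto_intros assms(2))
  note Fatou = infsum_Fatou[OF normp_term_nonneg _ this assms(3)[unfolded normp_def]]
  show "v \<in> E" "normp v \<le> l"
    using Fatou assms(1) by (simp_all add: spaceE_iff normp_def)
qed

lemma dnormp_posp_Fatou:
  assumes "\<And>k. w k \<in> E" "\<And>n. (\<lambda>k. w k n) \<longlonglongrightarrow> v n" "(\<lambda>k. dnormp (w k) (posp (w k))) \<longlonglongrightarrow> l"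
  shows "dnormp v (posp v) \<le> l"
proof -
  have "(\<lambda>k. dnormp_term (w k) (posp (w k)) n) \<longlonglongrightarrow> dnormp_term v (posp v) n" for n
    unfolding dnormp_term_def fdiff_def posp_def by (intro tendsto_intros assms(2))
  then show ?thesis
    using infsum_Fatou(2)[OF order_trans[OF normp_term_nonneg normp_term_posp_le]
        dnormp_term_posp_summable[OF assms(1)] _ assms(3)[unfolded dnormp_def]]
    by (simp add: dnormp_def)
qed

lemma dI_cmult_posp_eventually_nonpos:
  assumes v: "v \<in> E" "posp v \<noteq> (\<lambda>_. 0)" and L: "0 \<le> logsum (posp v)"
  obtains X where "\<And>x. X \<le> x \<Longrightarrow> I' (\<lambda>n. x * v n) (posp (\<lambda>n. x * v n)) \<le> 0"
proof
  define P where "P = dnormp v (posp v)"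
  define S where "S = qsum (posp v)"
  have "0 < S"
    unfolding S_def by (rule qsum_pos[OF posp_in_E[OF v(1)] v(2)])
  fix x assume "max (exp 1) ((\<bar>P\<bar> / S) powr (1 / (q - p))) \<le> x"
  then have "exp 1 \<le> x" and root_le: "(\<bar>P\<bar> / S) powr (1 / (q - p)) \<le> x"
    by auto
  then have "0 < x"
    using exp_gt_zero[of 1] by linarith
  then have "1 \<le> ln x"
    using ln_le_cancel_iff[of "exp 1" x] \<open>exp 1 \<le> x\<close> by simp
  have "\<bar>P\<bar> / S = ((\<bar>P\<bar> / S) powr (1 / (q - p))) powr (q - p)"
    using p_less_q \<open>0 < S\<close> by (simp add: powr_powr)
  also have "\<dots> \<le> x powr (q - p)"
    using root_le p_less_q by (intro powr_mono2) auto
  finally have "P \<le> x powr (q - p) * S"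
    using \<open>0 < S\<close> by (simp add: field_simps)
  then have "x ^ m * P \<le> x ^ m * (x powr (q - p) * S)"
    using \<open>0 < x\<close> by (simp add: mult_left_mono)
  also have "\<dots> = x powr q * S"
    using \<open>0 < x\<close> by (simp add: p_eq powr_realpow[symmetric] powr_add[symmetric])
  also have "\<dots> \<le> x powr q * (logsum (posp v) + r * ln x * S)"
  proof -
    have "1 \<le> r * ln x"
      using mult_mono[OF r_ge_1 \<open>1 \<le> ln x\<close>] r_ge_1 by simp
    then have "S \<le> r * ln x * S"
      using mult_right_mono[of 1 "r * ln x" S] \<open>0 < S\<close> by simp
    then show ?thesis
      using L by (intro mult_left_mono) auto
  qed
  finally show "I' (\<lambda>n. x * v n) (posp (\<lambda>n. x * v n)) \<le> 0"
    using dI_cmult_posp[OF v(1) \<open>0 < x\<close>] by (simp add: P_def S_def)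
qed

lemma signnehari_nonempty: "M \<noteq> {}"
proof -
  define w :: "int \<Rightarrow> real" where "w n = (if n = 0 then 1 else if n = 1 then -1 else 0)" for n
  define w' where "w' n = - w n" for n
  have "w \<in> E"
  proof -
    have "normp_term w n = 0" if "n \<notin> {-1, 0, 1}" for n
      using that m_ge_2 by (simp add: normp_term_def fdiff_def w_def power_0_left)
    then show ?thesis
      unfolding spaceE_iff by (subst summable_on_cong_neutral[of "{-1, 0, 1}"]) auto
  qed
  then have "w' \<in> E"
    unfolding w'_def by (rule uminus_in_E)
  have "posp w 0 = 1" "posp w' 1 = 1"
    by (simp_all add: posp_def w_def w'_def)
  then have "posp w \<noteq> (\<lambda>_. 0)" "posp w' \<noteq> (\<lambda>_. 0)"
    by (auto dest: fun_cong)
  moreover have "logsum (posp w) = 0" "logsum (posp w') = 0"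
    by (auto intro!: logsum_zero_one simp: posp_def w_def w'_def)
  ultimately obtain X1 X2 where
    X1: "\<And>x. X1 \<le> x \<Longrightarrow> I' (\<lambda>n. x * w n) (posp (\<lambda>n. x * w n)) \<le> 0" and
    X2: "\<And>x. X2 \<le> x \<Longrightarrow> I' (\<lambda>n. x * w' n) (posp (\<lambda>n. x * w' n)) \<le> 0"
    using dI_cmult_posp_eventually_nonpos[OF \<open>w \<in> E\<close>] dI_cmult_posp_eventually_nonpos[OF \<open>w' \<in> E\<close>]
    by (metis order_refl)
  define x where "x = max 1 (max X1 X2)"
  define u where "u n = x * w n" for n
  have "0 < x" by (simp add: x_def)
  have "u \<in> E"
    unfolding u_def by (rule cmult_in_E[OF \<open>w \<in> E\<close>])
  moreover have "\<not> u 0 \<le> 0" "\<not> 0 \<le> u 1"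
    using \<open>0 < x\<close> by (simp_all add: u_def w_def)
  then have "posp u \<noteq> (\<lambda>_. 0)" "negp u \<noteq> (\<lambda>_. 0)"
    unfolding posp_eq_zero_iff negp_eq_zero_iff by blast+
  moreover have "I' u (posp u) \<le> 0"
    unfolding u_def by (rule X1) (simp add: x_def)
  moreover have "I' u (negp u) \<le> 0"
    using X2[of x] by (simp add: u_def w'_def x_def dI_negp_eq)
  ultimately show ?thesis
    using signnehari_projection[of u] by blast
qed

lemma abs_le_of_funcI_le:
  assumes "u \<in> N" "I u \<le> B"
  shows "\<bar>u n\<bar> \<le> max 1 (B / kappa / b0)"
proof -
  have u: "u \<in> E" "normp u = logsum u"
    using assms(1) by (auto simp: nehari_iff)
  have "0 \<le> r / q\<^sup>2 * qsum u"
    using qsum_nonneg r_ge_1 by simp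
  then have "kappa * normp u \<le> B"
    using assms(2) funcI_on_nehari[OF u(2)] by linarith
  then have "normp u / b0 \<le> B / kappa / b0"
    using kappa_pos b0_pos by (simp add: field_simps)
  then show ?thesis
    using abs_le_normp_bound[OF u(1), of n] by (auto simp: max_def split: if_splits)
qed

lemma nehari_pointwise_limit:
  assumes w: "\<And>k. w k \<in> N" and bound: "\<And>k n. \<bar>w k n\<bar> \<le> R" "1 \<le> R"
    and lim: "\<And>n. (\<lambda>k. w k n) \<longlonglongrightarrow> v n"
  shows "v \<in> E" "v \<noteq> (\<lambda>_. 0)" "normp v \<le> logsum v"
    "(\<lambda>k. I (w k)) \<longlonglongrightarrow> kappa * logsum v + r / q\<^sup>2 * qsum v"
proof -
  have wN: "w k \<in> E" "w k \<noteq> (\<lambda>_. 0)" "normp (w k) = logsum (w k)" for k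
    using w by (auto simp: nehari_iff)
  have logsum_lim: "(\<lambda>k. logsum (w k)) \<longlonglongrightarrow> logsum v"
    and qsum_lim: "(\<lambda>k. qsum (w k)) \<longlonglongrightarrow> qsum v"
    using tendsto_logsum[OF bound lim] tendsto_qsum[OF bound lim] by simp_all
  then have "(\<lambda>k. normp (w k)) \<longlonglongrightarrow> logsum v"
    using wN(3) by simp
  then show "v \<in> E" "normp v \<le> logsum v"
    using normp_Fatou[OF wN(1) lim] by auto
  have "b0 \<le> logsum (w k)" for k
    using b0_le_normp[OF wN(1,2)] wN(3) by simp
  then have "b0 \<le> logsum v"
    by (intro tendsto_lowerbound[OF logsum_lim]) auto
  then show "v \<noteq> (\<lambda>_. 0)"
    using b0_pos logsum_zero_one[of "\<lambda>_. 0"] by auto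
  have "(\<lambda>k. kappa * logsum (w k) + r / q\<^sup>2 * qsum (w k)) \<longlonglongrightarrow> kappa * logsum v + r / q\<^sup>2 * qsum v"
    by (intro tendsto_intros logsum_lim qsum_lim)
  then show "(\<lambda>k. I (w k)) \<longlonglongrightarrow> kappa * logsum v + r / q\<^sup>2 * qsum v"
    using funcI_on_nehari[OF wN(3)] wN(3) by simp
qed

lemma nehari_minimizing_limit:
  assumes "X \<subseteq> N" "X \<noteq> {}"
  obtains w v R where "\<And>k. w k \<in> X" "1 \<le> R" "\<And>k n. \<bar>w k n\<bar> \<le> R" "\<And>n. (\<lambda>k. w k n) \<longlonglongrightarrow> v n"
    "v \<in> E" "v \<noteq> (\<lambda>_. 0)" "normp v \<le> logsum v"
    "Inf (I ` X) = kappa * logsum v + r / q\<^sup>2 * qsum v"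
proof -
  obtain u where u: "\<And>k. u k \<in> X" "(\<lambda>k. I (u k)) \<longlonglongrightarrow> Inf (I ` X)"
    using minimizing_sequence[OF assms(2) bdd_below_nehari[OF assms(1)]] by blast
  then have "u k \<in> N" for k
    using assms(1) by blast
  obtain B where "\<And>k. I (u k) \<le> B"
    using convergent_imp_Bseq[OF convergentI[OF u(2)]] by (auto simp: Bseq_def abs_le_iff)
  define R where "R = max 1 (B / kappa / b0)"
  have u_bound: "\<bar>u k n\<bar> \<le> R" for k n
    unfolding R_def by (rule abs_le_of_funcI_le[OF \<open>u k \<in> N\<close> \<open>I (u k) \<le> B\<close>])
  obtain \<sigma> v where \<sigma>: "strict_mono \<sigma>" "\<And>n. (\<lambda>k. u (\<sigma> k) n) \<longlonglongrightarrow> v n"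
    using bounded_pointwise_convergent_subseq[of u R, OF u_bound] by blast
  have "1 \<le> R" by (simp add: R_def)
  note v = nehari_pointwise_limit[OF \<open>u (\<sigma> _) \<in> N\<close> u_bound \<open>1 \<le> R\<close> \<sigma>(2)]
  have "(\<lambda>k. I (u (\<sigma> k))) \<longlonglongrightarrow> Inf (I ` X)"
    using LIMSEQ_subseq_LIMSEQ[OF u(2) \<sigma>(1)] by (simp add: comp_def)
  then have "Inf (I ` X) = kappa * logsum v + r / q\<^sup>2 * qsum v"
    using v(4) by (rule LIMSEQ_unique)
  with u(1) u_bound \<open>1 \<le> R\<close> \<sigma>(2) v(1-3) show thesis
    by (intro that[of "\<lambda>k. u (\<sigma> k)" R v])
qed

lemma minimizer_of_limit:
  assumes "X \<subseteq> N" "v \<in> E" "normp v \<le> logsum v"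
    "Inf (I ` X) = kappa * logsum v + r / q\<^sup>2 * qsum v"
    "W \<in> X" "normp W \<le> normp v" "qsum W \<le> qsum v"
  shows "I W = Inf (I ` X)"
proof (rule antisym)
  have "normp W = logsum W"
    using assms(1,5) by (auto simp: nehari_iff)
  then have "I W = kappa * normp W + r / q\<^sup>2 * qsum W"
    by (rule funcI_on_nehari)
  also have "\<dots> \<le> kappa * normp v + r / q\<^sup>2 * qsum v"
    using assms(6,7) kappa_pos r_ge_1 by (intro add_mono mult_left_mono) auto
  also have "\<dots> \<le> Inf (I ` X)"
    using assms(3,4) kappa_pos by simp
  finally show "I W \<le> Inf (I ` X)" .
  show "Inf (I ` X) \<le> I W"
    using assms(1,5) bdd_below_nehari by (intro cInf_lower) auto
qed

lemma nehari_has_minimizer: "\<exists>u\<in>N. I u = Inf (I ` N)"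
proof -
  have "N \<noteq> {}"
    using signnehari_nonempty signnehari_subset_nehari by blast
  then obtain v where v: "v \<in> E" "v \<noteq> (\<lambda>_. 0)" "normp v \<le> logsum v"
    "Inf (I ` N) = kappa * logsum v + r / q\<^sup>2 * qsum v"
    by (rule nehari_minimizing_limit[OF subset_refl]) blast
  obtain t where t: "0 < t" "t \<le> 1" "(\<lambda>n. t * v n) \<in> N"
    using nehari_projection[OF v(1-3)] by blast
  have "I (\<lambda>n. t * v n) = Inf (I ` N)"
    using t normp_scale_parts_le[OF v(1), of t t] qsum_scale_parts_le[OF v(1), of t t]
    by (intro minimizer_of_limit[OF subset_refl v(1,3,4) t(3)]) (simp_all add: scale_parts_same)
  with t(3) show ?thesis by blast
qed

lemma limit_posp_nonzero_dI_nonpos: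
  assumes w: "\<And>k. w k \<in> E" "\<And>k. posp (w k) \<noteq> (\<lambda>_. 0)" "\<And>k. I' (w k) (posp (w k)) = 0"
    and bound: "\<And>k n. \<bar>w k n\<bar> \<le> R" "1 \<le> R" and lim: "\<And>n. (\<lambda>k. w k n) \<longlonglongrightarrow> v n"
  shows "posp v \<noteq> (\<lambda>_. 0)" "I' v (posp v) \<le> 0"
proof -
  have eq: "dnormp (w k) (posp (w k)) = logsum (posp (w k))" for k
    using w(3)[of k] by (simp add: dI_posp)
  have logsum_lim: "(\<lambda>k. logsum (posp (w k))) \<longlonglongrightarrow> logsum (posp v)"
  proof (rule tendsto_logsum[OF _ bound(2)])
    show "\<bar>posp (w k) n\<bar> \<le> R" for k n
      using abs_posp_le[of "w k" n] bound(1)[of k n] by linarith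
    show "(\<lambda>k. posp (w k) n) \<longlonglongrightarrow> posp v n" for n
      unfolding posp_def by (intro tendsto_intros lim)
  qed
  have "b0 \<le> logsum (posp (w k))" for k
  proof -
    have "normp (posp (w k)) \<le> logsum (posp (w k))"
      using normp_posp_le[OF w(1)] eq by simp
    moreover from this have "b0 \<le> normp (posp (w k))"
      by (rule b0_le_normp[OF posp_in_E[OF w(1)] w(2)])
    ultimately show ?thesis by simp
  qed
  then have "b0 \<le> logsum (posp v)"
    by (intro tendsto_lowerbound[OF logsum_lim]) auto
  then show "posp v \<noteq> (\<lambda>_. 0)"
    using b0_pos logsum_zero_one[of "\<lambda>_. 0"] by auto
  have "dnormp v (posp v) \<le> logsum (posp v)"
    using dnormp_posp_Fatou[OF w(1) lim] logsum_lim by (simp add: eq)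
  then show "I' v (posp v) \<le> 0"
    by (simp add: dI_posp)
qed

lemma signnehari_has_minimizer: "\<exists>u\<in>M. I u = Inf (I ` M)"
proof -
  obtain w v R where wv: "\<And>k. w k \<in> M" "1 \<le> R" "\<And>k n. \<bar>w k n\<bar> \<le> R"
    "\<And>n. (\<lambda>k. w k n) \<longlonglongrightarrow> v n" "v \<in> E" "normp v \<le> logsum v"
    "Inf (I ` M) = kappa * logsum v + r / q\<^sup>2 * qsum v"
    by (rule nehari_minimizing_limit[OF signnehari_subset_nehari signnehari_nonempty]) blast
  have w: "w k \<in> E" "posp (w k) \<noteq> (\<lambda>_. 0)" "negp (w k) \<noteq> (\<lambda>_. 0)"
    "I' (w k) (posp (w k)) = 0" "I' (w k) (negp (w k)) = 0" for k
    using wv(1) by (auto simp: signnehari_iff)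
  have pos: "posp v \<noteq> (\<lambda>_. 0)" "I' v (posp v) \<le> 0"
    using limit_posp_nonzero_dI_nonpos[OF w(1,2,4) wv(3,2,4)] by auto
  have "(\<lambda>n. - w k n) \<in> E" "posp (\<lambda>n. - w k n) \<noteq> (\<lambda>_. 0)"
    "I' (\<lambda>n. - w k n) (posp (\<lambda>n. - w k n)) = 0" for k
    using uminus_in_E[OF w(1)] w(3,5) dI_negp_eq[of "w k"] by (auto simp: posp_uminus fun_eq_iff)
  moreover have "\<bar>- w k n\<bar> \<le> R" "(\<lambda>k. - w k n) \<longlonglongrightarrow> - v n" for k n
    using wv(3,4) by (auto intro: tendsto_minus)
  ultimately have "posp (\<lambda>n. - v n) \<noteq> (\<lambda>_. 0)" "I' (\<lambda>n. - v n) (posp (\<lambda>n. - v n)) \<le> 0"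
    using limit_posp_nonzero_dI_nonpos[of "\<lambda>k n. - w k n" R "\<lambda>n. - v n"] wv(2) by auto
  then have neg: "negp v \<noteq> (\<lambda>_. 0)" "I' v (negp v) \<le> 0"
    by (auto simp: posp_uminus dI_negp_eq fun_eq_iff)
  obtain s t where st: "0 < s" "s \<le> 1" "0 < t" "t \<le> 1" "scale_parts v s t \<in> M"
    using signnehari_projection[OF wv(5) pos(1) neg(1) pos(2) neg(2)] by blast
  have "I (scale_parts v s t) = Inf (I ` M)"
    using st by (intro minimizer_of_limit[OF signnehari_subset_nehari wv(5-7) st(5)]
        normp_scale_parts_le qsum_scale_parts_le wv(5)) auto
  with st(5) show ?thesis by blast
qed

end

theorem lemma2p9:
  fixes p q r :: real and a b c :: "int \<Rightarrow> real"
  assumes "1 < p" and "p < q" and "\<exists>k::nat. k \<ge> 1 \<and> p / 2 = real k" and "r \<ge> 1"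
    and "\<And>n. a n > 0" and "\<And>n. b n > 0" and "\<And>n. c n > 0"
    and C1: "\<exists>b0 > 0. (\<forall>n. b n \<ge> b0) \<and> (\<forall>K. \<exists>N. \<forall>n. \<bar>n\<bar> \<ge> N \<longrightarrow> b n \<ge> K)"
    and C2: "\<exists>c0 > 0. (\<forall>n. c n \<le> c0) \<and> c summable_on UNIV"
  shows "bdd_below (funcI p q r a b c ` signnehari p q r a b c)
       \<and> bdd_below (funcI p q r a b c ` nehari p q r a b c)
       \<and> Inf (funcI p q r a b c ` signnehari p q r a b c) > 0
       \<and> Inf (funcI p q r a b c ` nehari p q r a b c) > 0
       \<and> (\<exists>u0 \<in> signnehari p q r a b c.
            funcI p q r a b c u0 = Inf (funcI p q r a b c ` signnehari p q r a b c))
       \<and> (\<exists>ub \<in> nehari p q r a b c.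
            funcI p q r a b c ub = Inf (funcI p q r a b c ` nehari p q r a b c))"
proof -
  obtain k :: nat where "1 \<le> k" "p = real (2 * k)"
    using assms(3) by auto
  moreover obtain b0 where "0 < b0" "\<And>n. b0 \<le> b n"
    using C1 by auto
  ultimately interpret log_nehari p q r a b c "2 * k" b0
    using assms(2,4,5,7) C2 by unfold_locales auto
  have "M \<noteq> {}" "N \<noteq> {}"
    using signnehari_nonempty signnehari_subset_nehari by auto
  moreover have "0 < kappa * b0"
    using kappa_pos \<open>0 < b0\<close> by simp
  ultimately have "0 < Inf (I ` M)" "0 < Inf (I ` N)"
    using Inf_nehari_ge[OF signnehari_subset_nehari] Inf_nehari_ge[OF subset_refl]
    by (auto intro: less_le_trans)
  then show ?thesis
    using bdd_below_nehari[OF signnehari_subset_nehari] bdd_below_nehari[OF subset_refl]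
      signnehari_has_minimizer nehari_has_minimizer by blast
qed

end
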